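(* Let $H=(\mathbb N,\mathbb N,\mathbb N,p_1,p_2,p_3)$ with $\mathbb N=\{0,1,2,\dots\}$ and $p_1(k,\ell,m)=\ell+1$ if $k=\ell+1$ and $0$ otherwise, $p_2(k,\ell,m)=k$ if $k=\ell$ and $0$ otherwise, $p_3(k,\ell,m)=0$, with the pure belief structure. Then property B holds, $\overline{GR}^{\omega}=(\emptyset,\emptyset,\mathbb N)$, $\overline{GR}^{\omega+1}=(\emptyset,\emptyset,\emptyset)$, and $\overline{LR}^{\alpha}=\overline{GR}^{\alpha}$ for all ordinals $\alpha$; in particular the closure ordinal of both $\overline{GR}$ and $\overline{LR}$ is $\omega+1$.
   Context: Restrictions of $H$ are triples $(S_1,S_2,S_3)$ with $S_i\subseteq\mathbb N$, ordered componentwise. Pure belief structure: beliefs of player $i$ in $G=(S_1,S_2,S_3)$ are the joint strategies $s_{-i}\in S_{-i}=\prod_{j\ne i}S_j$, expected payoff is the payoff. $s_i\in BR_G(s_{-i})$ iff $p_i(s_i,s_{-i})\ge p_i(s_i',s_{-i})$ for all $s_i'\in S_i$. Property B: every $s_{-i}\in\prod_{j\ne i}\mathbb N$ has a best response in $H$. $GR(G)_i:=\{s_i\in\mathbb N\mid\exists s_{-i}\in S_{-i}: s_i\in BR_H(s_{-i})\}$; $LR(G)_i:=\{s_i\in\mathbb N\mid\exists s_{-i}\in S_{-i}: s_i\in BR_G(s_{-i})\}$; $\overline{T}(G):=T(G)\cap G$. Iterations: $T^0:=H$, $T^{\alpha+1}:=T(T^\alpha)$, $T^\beta:=\bigcap_{\alpha<\beta}T^\alpha$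 for limit $\beta$; closure ordinal = least $\alpha$ with $T^{\alpha+1}=T^\alpha$. *)

theory Defs
  imports Main
begin

datatype player = P1 | P2 | P3

type_synonym profile = "player \<Rightarrow> nat"

(* a restriction (S_1,S_2,S_3); the componentwise order is the pointwise order
   on functions, H = top = (\<lambda>_. UNIV), intersection = inf / INF *)
type_synonym restr = "player \<Rightarrow> nat set"

definition pay :: "player \<Rightarrow> profile \<Rightarrow> nat" where
  "pay i s = (case i of
       P1 \<Rightarrow> (if s P1 = s P2 + 1 then s P2 + 1 else 0)
     | P2 \<Rightarrow> (if s P1 = s P2 then s P1 else 0)
     | P3 \<Rightarrow> 0)"

definition Hgame :: restr where "Hgame = (\<lambda>_. UNIV)"

(* belief s_{-i} of player i in G: the components j \<noteq> i of s lie in S_j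
   (the i-component of s is irrelevant) *)
definition belief_in :: "restr \<Rightarrow> player \<Rightarrow> profile \<Rightarrow> bool" where
  "belief_in G i s \<longleftrightarrow> (\<forall>j. j \<noteq> i \<longrightarrow> s j \<in> G j)"

definition BR :: "restr \<Rightarrow> player \<Rightarrow> profile \<Rightarrow> nat \<Rightarrow> bool" where
  "BR G i s x \<longleftrightarrow> (\<forall>y \<in> G i. pay i (s(i := x)) \<ge> pay i (s(i := y)))"

definition propertyB :: bool where
  "propertyB \<longleftrightarrow> (\<forall>i s. \<exists>x. BR Hgame i s x)"

definition GR :: "restr \<Rightarrow> restr" where
  "GR G = (\<lambda>i. {x. \<exists>s. belief_in G i s \<and> BR Hgame i s x})"

definition LR :: "restr \<Rightarrow> restr" where
  "LR G = (\<lambda>i. {x. \<exists>s. belief_in G i s \<and> BR G i s x})"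

definition bar :: "(restr \<Rightarrow> restr) \<Rightarrow> restr \<Rightarrow> restr" where
  "bar T G = inf (T G) G"

definition is_succ_of :: "'o::wellorder \<Rightarrow> 'o \<Rightarrow> bool" where
  "is_succ_of \<beta> \<alpha> \<longleftrightarrow> \<beta> < \<alpha> \<and> (\<forall>\<gamma><\<alpha>. \<gamma> \<le> \<beta>)"

(* T^0 = H (empty INF = top = H), T^{\<beta>+1} = T(T^\<beta>), T^\<lambda> = INF_{\<beta><\<lambda>} T^\<beta> *)
definition titer :: "(restr \<Rightarrow> restr) \<Rightarrow> 'o::wellorder \<Rightarrow> restr" where
  "titer T = wfrec {(x, y). x < y}
     (\<lambda>f \<alpha>. if \<exists>\<beta>. is_succ_of \<beta> \<alpha> then T (f (THE \<beta>. is_succ_of \<beta> \<alpha>))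
            else (INF \<beta>\<in>{\<beta>. \<beta> < \<alpha>}. f \<beta>))"

definition is_omega :: "'o::wellorder \<Rightarrow> bool" where
  "is_omega \<alpha> \<longleftrightarrow> infinite {\<beta>. \<beta> < \<alpha>} \<and> (\<forall>\<beta><\<alpha>. finite {\<gamma>. \<gamma> < \<beta>})"

definition is_omega_plus_one :: "'o::wellorder \<Rightarrow> bool" where
  "is_omega_plus_one \<alpha> \<longleftrightarrow> (\<exists>\<beta>. is_succ_of \<beta> \<alpha> \<and> is_omega \<beta>)"

definition is_closure_ordinal :: "(restr \<Rightarrow> restr) \<Rightarrow> 'o::wellorder \<Rightarrow> bool" where
  "is_closure_ordinal T \<alpha> \<longleftrightarrow> T (titer T \<alpha>) = titer T \<alpha> \<and>
     (\<forall>\<gamma><\<alpha>. T (titer T \<gamma>) \<noteq> titer T \<gamma>)"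

end

theory Submission
  imports Defs
begin

text \<open>In H, player 1's only best response to \<open>\<ell>\<close> is \<open>\<ell> + 1\<close>, player 2's is to copy \<open>k\<close>
  (anything if \<open>k = 0\<close>), and player 3 is indifferent. So the \<open>n\<close>-th GR-stage is
  \<open>({(n+1) div 2..}, {n div 2..}, \<nat>)\<close>: every round raises one lower bound by one, the stages
  never stabilise, the first two components are empty at \<open>\<omega>\<close>, and this empties the third
  one at \<open>\<omega> + 1\<close>. All stages have up-closed first two components, and on such restrictions
  a best response within G that is none within H can be traded for one that is; hence LR
  and GR produce the same stages.\<close>

lemma belief_in_P1 [simp]: "belief_in G P1 s \<longleftrightarrow> s P2 \<in> G P2 \<and> s P3 \<in> G P3"
  and belief_in_P2 [simp]: "belief_in G P2 s \<longleftrightarrow> s P1 \<in> G P1 \<and> s P3 \<in> G P3"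
  and belief_in_P3 [simp]: "belief_in G P3 s \<longleftrightarrow> s P1 \<in> G P1 \<and> s P2 \<in> G P2"
  unfolding belief_in_def by (auto; metis player.exhaust)+

lemma BR_Hgame_P1_iff: "BR Hgame P1 s x \<longleftrightarrow> x = s P2 + 1"
  by (auto simp: BR_def Hgame_def pay_def dest: spec[of _ "s P2 + 1"])

lemma BR_Hgame_P2_iff: "BR Hgame P2 s x \<longleftrightarrow> s P1 = 0 \<or> x = s P1"
  by (auto simp: BR_def Hgame_def pay_def dest: spec[of _ "s P1"])

lemma BR_P3: "BR G P3 s x"
  by (simp add: BR_def pay_def)

lemma BR_Hgame_imp_BR: "BR Hgame i s x \<Longrightarrow> BR G i s x"
  by (simp add: BR_def Hgame_def)

lemma propertyB_holds: propertyB
  unfolding propertyB_def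
proof (intro allI)
  fix i s
  show "\<exists>x. BR Hgame i s x"
    by (cases i) (auto simp: BR_Hgame_P1_iff BR_Hgame_P2_iff BR_P3)
qed

lemma GR_P1: "GR G P1 = (if G P3 = {} then {} else Suc ` G P2)"
  by (auto simp: GR_def BR_Hgame_P1_iff intro!: exI[of _ "\<lambda>i. if i = P2 then _ else _"])

lemma GR_P2: "GR G P2 = (if G P1 = {} \<or> G P3 = {} then {} else if 0 \<in> G P1 then UNIV else G P1)"
proof -
  have "x \<in> GR G P2" if "k \<in> G P1" "m \<in> G P3" "k = 0 \<or> x = k" for x k m
    using that by (auto simp: GR_def BR_Hgame_P2_iff intro!: exI[of _ "\<lambda>i. if i = P1 then k else m"])
  then show ?thesis
    by (auto simp: GR_def BR_Hgame_P2_iff)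
qed

lemma GR_P3: "GR G P3 = (if G P1 = {} \<or> G P2 = {} then {} else UNIV)"
proof -
  have "x \<in> GR G P3" if "k \<in> G P1" "l \<in> G P2" for x k l
    using that by (auto simp: GR_def BR_P3 intro!: exI[of _ "\<lambda>i. if i = P1 then k else l"])
  then show ?thesis
    by (auto simp: GR_def)
qed

lemma bar_le: "bar T G \<le> G"
  by (simp add: bar_def)

lemma GR_le_LR: "GR G \<le> LR G"
  by (auto simp: le_fun_def GR_def LR_def intro: BR_Hgame_imp_BR)

definition upclosed :: "nat set \<Rightarrow> bool" where
  "upclosed S \<longleftrightarrow> (\<forall>x\<in>S. \<forall>y\<ge>x. y \<in> S)"

lemma upclosed_Int: "upclosed S \<Longrightarrow> upclosed T \<Longrightarrow> upclosed (S \<inter> T)"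
  and upclosed_Inter: "(\<And>S. S \<in> A \<Longrightarrow> upclosed S) \<Longrightarrow> upclosed (\<Inter> A)"
  and upclosed_UNIV: "upclosed UNIV"
  and upclosed_empty: "upclosed {}"
  unfolding upclosed_def by blast+

lemma upclosed_image_Suc: "upclosed S \<Longrightarrow> upclosed (Suc ` S)"
  unfolding upclosed_def by (metis Suc_le_D Suc_le_mono image_iff)

text \<open>If \<open>x \<in> G i\<close> is a best response within G but not within H, the best response within H
  is missing from \<open>G i\<close>, so x lies strictly above it; up-closedness then yields a belief in G
  to which x is the best response within H.\<close>
lemma LR_Int_subset_GR:
  assumes up1: "upclosed (G P1)" and up2: "upclosed (G P2)"
  shows "LR G i \<inter> G i \<subseteq> GR G i"
proof
  fix x
  assume "x \<in> LR G i \<inter> G i"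
  then have x: "x \<in> LR G i" "x \<in> G i"
    by simp_all
  obtain s where s: "belief_in G i s" and br: "BR G i s x"
    using x(1) by (auto simp: LR_def)
  show "x \<in> GR G i"
  proof (cases i)
    case P1
    show ?thesis
    proof (cases "x = s P2 + 1")
      case True
      then show ?thesis using s P1 by (auto simp: GR_def BR_Hgame_P1_iff)
    next
      case False
      with br P1 have "s P2 + 1 \<notin> G P1"
        by (auto simp: BR_def pay_def dest: bspec[of _ _ "s P2 + 1"])
      with up1 x(2) P1 have "s P2 + 1 < x"
        unfolding upclosed_def by (metis not_le_imp_less)
      with up2 s P1 have "x - 1 \<in> G P2"
        unfolding upclosed_def by auto
      moreover have "x = (x - 1) + 1"
        using \<open>s P2 + 1 < x\<close> by simp
      ultimately show ?thesis
        using s P1 by (auto simp: GR_def BR_Hgame_P1_iff intro!: exI[of _ "s(P2 := x - 1)"])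
    qed
  next
    case P2
    show ?thesis
    proof (cases "s P1 = 0 \<or> x = s P1")
      case True
      then show ?thesis using s P2 by (auto simp: GR_def BR_Hgame_P2_iff)
    next
      case False
      with br P2 have "s P1 \<notin> G P2"
        by (auto simp: BR_def pay_def dest: bspec[of _ _ "s P1"])
      with up2 x(2) P2 have "s P1 < x"
        unfolding upclosed_def by (metis not_le_imp_less)
      with up1 s P2 have "x \<in> G P1"
        unfolding upclosed_def by auto
      with s P2 show ?thesis
        by (auto simp: GR_def BR_Hgame_P2_iff intro!: exI[of _ "s(P1 := x)"])
    qed
  next
    case P3
    then show ?thesis using s by (auto simp: GR_def BR_P3)
  qed
qed

lemma bar_LR_eq_bar_GR:
  assumes "upclosed (G P1)" and "upclosed (G P2)"
  shows "bar LR G = bar GR G"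
  using LR_Int_subset_GR[OF assms] GR_le_LR
  by (fastforce simp: bar_def le_fun_def intro!: antisym)

lemma upclosed_bar_GR:
  assumes "upclosed (G P1)" and "upclosed (G P2)"
  shows "upclosed (bar GR G P1)" and "upclosed (bar GR G P2)"
  using assms
  by (simp_all add: bar_def GR_P1 GR_P2 upclosed_Int upclosed_image_Suc upclosed_UNIV upclosed_empty)

lemma the_is_succ_of: "is_succ_of \<beta> \<alpha> \<Longrightarrow> (THE \<beta>. is_succ_of \<beta> \<alpha>) = \<beta>"
  unfolding is_succ_of_def by (blast intro: antisym)

lemma titer_unfold:
  fixes \<alpha> :: "'o::wellorder"
  shows "titer T \<alpha> = (if \<exists>\<beta>. is_succ_of \<beta> \<alpha> then T (titer T (THE \<beta>. is_succ_of \<beta> \<alpha>))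
     else (INF \<beta>\<in>{\<beta>. \<beta> < \<alpha>}. titer T \<beta>))"
proof -
  have "titer T \<alpha> = (if \<exists>\<beta>. is_succ_of \<beta> \<alpha>
      then T (cut (titer T) {(x, y). x < y} \<alpha> (THE \<beta>. is_succ_of \<beta> \<alpha>))
      else (INF \<beta>\<in>{\<beta>. \<beta> < \<alpha>}. cut (titer T) {(x, y). x < y} \<alpha> \<beta>))"
    unfolding titer_def by (rule wfrec[OF wf, THEN trans]) simp
  also have "\<dots> = (if \<exists>\<beta>. is_succ_of \<beta> \<alpha> then T (titer T (THE \<beta>. is_succ_of \<beta> \<alpha>))
      else (INF \<beta>\<in>{\<beta>. \<beta> < \<alpha>}. titer T \<beta>))"
  proof (cases "\<exists>\<beta>. is_succ_of \<beta> \<alpha>")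
    case True
    then obtain \<beta> where succ: "is_succ_of \<beta> \<alpha>" ..
    then have "\<beta> < \<alpha>"
      by (simp add: is_succ_of_def)
    with succ show ?thesis
      by (simp add: the_is_succ_of cut_apply)
  qed (auto simp: cut_apply intro!: INF_cong)
  finally show ?thesis .
qed

lemma titer_succ: "is_succ_of \<beta> \<alpha> \<Longrightarrow> titer T \<alpha> = T (titer T \<beta>)"
  by (subst titer_unfold) (auto simp: the_is_succ_of)

lemma titer_limit: "\<nexists>\<beta>. is_succ_of \<beta> \<alpha> \<Longrightarrow> titer T \<alpha> = (INF \<beta>\<in>{\<beta>. \<beta> < \<alpha>}. titer T \<beta>)"
  by (subst titer_unfold) simp

lemma titer_finite:
  fixes \<alpha> :: "'o::wellorder"
  assumes "finite {\<beta>. \<beta> < \<alpha>}"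
  shows "titer T \<alpha> = (T ^^ card {\<beta>. \<beta> < \<alpha>}) top"
  using assms
proof (induction \<alpha> rule: less_induct)
  case (less \<alpha>)
  show ?case
  proof (cases "{\<beta>. \<beta> < \<alpha>} = {}")
    case True
    then have "\<nexists>\<beta>. is_succ_of \<beta> \<alpha>"
      by (auto simp: is_succ_of_def)
    with True show ?thesis
      by (simp add: titer_limit)
  next
    case False
    define \<beta> where "\<beta> = Max {\<beta>. \<beta> < \<alpha>}"
    have "\<beta> < \<alpha>" and "\<forall>\<gamma><\<alpha>. \<gamma> \<le> \<beta>"
      using Max_in[OF less.prems False] less.prems by (simp_all add: \<beta>_def)
    then have succ: "is_succ_of \<beta> \<alpha>" and below: "{\<gamma>. \<gamma> < \<alpha>} = insert \<beta> {\<gamma>. \<gamma> < \<beta>}"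
      by (auto simp: is_succ_of_def order.order_iff_strict intro: less_trans)
    with less.prems have "finite {\<gamma>. \<gamma> < \<beta>}"
      by simp
    with less.IH[OF \<open>\<beta> < \<alpha>\<close>] below show ?thesis
      by (simp add: titer_succ[OF succ])
  qed
qed

lemma is_omega_no_succ:
  assumes "is_omega \<alpha>"
  shows "\<nexists>\<beta>. is_succ_of \<beta> \<alpha>"
proof
  assume "\<exists>\<beta>. is_succ_of \<beta> \<alpha>"
  then obtain \<beta> where "\<beta> < \<alpha>" and "{\<gamma>. \<gamma> < \<alpha>} \<subseteq> insert \<beta> {\<gamma>. \<gamma> < \<beta>}"
    by (auto simp: is_succ_of_def order.order_iff_strict)
  with assms show False
    unfolding is_omega_def by (meson finite_insert finite_subset)
qed

lemma is_omega_unbounded: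
  assumes "is_omega \<alpha>"
  shows "\<exists>\<beta><\<alpha>. n \<le> card {\<gamma>. \<gamma> < \<beta>}"
proof -
  from assms have "infinite {\<beta>. \<beta> < \<alpha>}"
    by (simp add: is_omega_def)
  from infinite_arbitrarily_large[OF this, of "Suc n"]
  obtain F where F: "finite F" "card F = Suc n" "F \<subseteq> {\<beta>. \<beta> < \<alpha>}"
    by blast
  define \<beta> where "\<beta> = Max F"
  have "F \<noteq> {}"
    using F(2) by auto
  then have "\<beta> \<in> F"
    unfolding \<beta>_def using F(1) by (rule Max_in[rotated])
  then have "\<beta> < \<alpha>"
    using F(3) by blast
  have "F - {\<beta>} \<subseteq> {\<gamma>. \<gamma> < \<beta>}"
    using Max_ge[OF F(1)] by (auto simp: \<beta>_def le_less)
  moreover have "finite {\<gamma>. \<gamma> < \<beta>}"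
    using assms \<open>\<beta> < \<alpha>\<close> by (simp add: is_omega_def)
  ultimately have "card (F - {\<beta>}) \<le> card {\<gamma>. \<gamma> < \<beta>}"
    by (rule card_mono[rotated])
  with F \<open>\<beta> \<in> F\<close> \<open>\<beta> < \<alpha>\<close> show ?thesis
    by auto
qed

lemma funpow_antimono:
  fixes T :: "'a::order \<Rightarrow> 'a"
  assumes "\<And>x. T x \<le> x" and "m \<le> n"
  shows "(T ^^ n) x \<le> (T ^^ m) x"
  using assms(2)
proof (induction n rule: dec_induct)
  case (step k)
  have "(T ^^ Suc k) x \<le> (T ^^ k) x"
    using assms(1) by simp
  from this step.IH show ?case
    by (rule order_trans)
qed simp

text \<open>For a deflationary operator the finite stages decrease, so any cofinal set of them
  has the same infimum.\<close>
lemma titer_omega: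
  fixes \<alpha> :: "'o::wellorder"
  assumes deflationary: "\<And>G. T G \<le> G" and "is_omega \<alpha>"
  shows "titer T \<alpha> = (INF n. (T ^^ n) top)"
proof (rule antisym)
  have finite_below: "titer T \<beta> = (T ^^ card {\<gamma>. \<gamma> < \<beta>}) top" if "\<beta> < \<alpha>" for \<beta>
    using assms(2) that unfolding is_omega_def by (blast intro: titer_finite)
  have titer_limit': "titer T \<alpha> = (INF \<beta>\<in>{\<beta>. \<beta> < \<alpha>}. titer T \<beta>)"
    using titer_limit[OF is_omega_no_succ[OF assms(2)]] .
  show "titer T \<alpha> \<le> (INF n. (T ^^ n) top)"
  proof (rule INF_greatest)
    fix n
    obtain \<beta> where "\<beta> < \<alpha>" and "n \<le> card {\<gamma>. \<gamma> < \<beta>}"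
      using is_omega_unbounded[OF assms(2)] by blast
    then have "titer T \<alpha> \<le> (T ^^ card {\<gamma>. \<gamma> < \<beta>}) top"
      unfolding titer_limit' by (auto intro: INF_lower2 simp: finite_below)
    also have "\<dots> \<le> (T ^^ n) top"
      using funpow_antimono[OF deflationary \<open>n \<le> _\<close>] .
    finally show "titer T \<alpha> \<le> (T ^^ n) top" .
  qed
  show "(INF n. (T ^^ n) top) \<le> titer T \<alpha>"
    unfolding titer_limit' by (auto intro!: INF_greatest INF_lower simp: finite_below)
qed

lemma titer_eq_on_invariant:
  fixes \<alpha> :: "'o::wellorder"
  assumes agree: "\<And>G. P G \<Longrightarrow> T' G = T G"
    and preserved: "\<And>G. P G \<Longrightarrow> P (T G)"
    and Inf_closed: "\<And>A. (\<And>G. G \<in> A \<Longrightarrow> P G) \<Longrightarrow> P (Inf A)"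
  shows "titer T' \<alpha> = titer T \<alpha> \<and> P (titer T \<alpha>)"
proof (induction \<alpha> rule: less_induct)
  case (less \<alpha>)
  show ?case
  proof (cases "\<exists>\<beta>. is_succ_of \<beta> \<alpha>")
    case True
    then obtain \<beta> where succ: "is_succ_of \<beta> \<alpha>" ..
    then have "titer T' \<beta> = titer T \<beta> \<and> P (titer T \<beta>)"
      by (intro less.IH) (simp add: is_succ_of_def)
    then show ?thesis
      by (simp add: titer_succ[OF succ] agree preserved)
  next
    case False
    have "titer T' \<alpha> = titer T \<alpha>"
      unfolding titer_limit[OF False] using less.IH by (intro INF_cong) auto
    moreover have "P (titer T \<alpha>)"
      unfolding titer_limit[OF False] by (rule Inf_closed) (use less.IH in auto)
    ultimately show ?thesis ..
  qed
qed

lemma is_closure_ordinal_omega_plus_one: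
  fixes \<alpha> :: "'o::wellorder"
  assumes succ: "is_succ_of \<beta> \<alpha>" and "is_omega \<beta>"
    and finite_moving: "\<And>n. T ((T ^^ n) top) \<noteq> (T ^^ n) top"
    and "T (titer T \<beta>) \<noteq> titer T \<beta>" and "T (titer T \<alpha>) = titer T \<alpha>"
  shows "is_closure_ordinal T \<alpha>"
proof -
  have "T (titer T \<gamma>) \<noteq> titer T \<gamma>" if "\<gamma> < \<alpha>" for \<gamma>
  proof (cases "\<gamma> = \<beta>")
    case False
    with succ that have "\<gamma> < \<beta>"
      by (simp add: is_succ_of_def order.not_eq_order_implies_strict)
    with \<open>is_omega \<beta>\<close> have "titer T \<gamma> = (T ^^ card {\<delta>. \<delta> < \<gamma>}) top"
      unfolding is_omega_def by (blast intro: titer_finite)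
    with finite_moving show ?thesis
      by simp
  qed (use assms in simp)
  with assms show ?thesis
    by (simp add: is_closure_ordinal_def)
qed

definition GR_stage :: "nat \<Rightarrow> restr" where
  "GR_stage n = (\<lambda>i. case i of P1 \<Rightarrow> {(n + 1) div 2..} | P2 \<Rightarrow> {n div 2..} | P3 \<Rightarrow> UNIV)"

lemma image_Suc_atLeast: "Suc ` {k..} = {Suc k..}"
  by (metis image_add_atLeast plus_1_eq_Suc)

lemma bar_GR_GR_stage: "bar GR (GR_stage n) = GR_stage (Suc n)"
proof
  fix i
  show "bar GR (GR_stage n) i = GR_stage (Suc n) i"
    by (cases i) (auto simp: bar_def GR_P1 GR_P2 GR_P3 GR_stage_def image_Suc_atLeast)
qed

lemma funpow_bar_GR: "(bar GR ^^ n) top = GR_stage n"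
proof (induction n)
  case 0
  show ?case
    by (auto simp: GR_stage_def split: player.split)
next
  case (Suc n)
  then show ?case
    by (simp add: bar_GR_GR_stage)
qed

text \<open>The lower bounds of the first two components add up to the stage number.\<close>
lemma GR_stage_Suc_neq: "GR_stage (Suc n) \<noteq> GR_stage n"
proof
  assume "GR_stage (Suc n) = GR_stage n"
  then have "GR_stage (Suc n) P1 = GR_stage n P1" and "GR_stage (Suc n) P2 = GR_stage n P2"
    by simp_all
  then show False
    by (simp add: GR_stage_def)
qed

lemma INF_GR_stage: "(INF n. GR_stage n) = (\<lambda>i. if i = P3 then UNIV else {})"
proof
  fix i
  show "(INF n. GR_stage n) i = (if i = P3 then UNIV else {})"
  proof (cases "i = P3")
    case False
    then have "x \<notin> GR_stage (2 * x + 2) i" for x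
      by (cases i) (auto simp: GR_stage_def)
    with False show ?thesis
      by auto
  qed (simp add: GR_stage_def)
qed

lemma bar_GR_limit_stage: "bar GR (\<lambda>i. if i = P3 then UNIV else {}) = (\<lambda>i. {})"
  by (auto simp: bar_def GR_P3 fun_eq_iff)

lemma titer_bar_GR_omega:
  fixes \<alpha> :: "'o::wellorder"
  assumes "is_omega \<alpha>"
  shows "titer (bar GR) \<alpha> = (\<lambda>i. if i = P3 then UNIV else {})"
  using titer_omega[OF bar_le assms] by (simp add: funpow_bar_GR INF_GR_stage)

lemma titer_bar_GR_omega_plus_one:
  fixes \<alpha> :: "'o::wellorder"
  assumes "is_omega_plus_one \<alpha>"
  shows "titer (bar GR) \<alpha> = (\<lambda>i. {})"
proof -
  obtain \<beta> where "is_succ_of \<beta> \<alpha>" and "is_omega \<beta>"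
    using assms by (auto simp: is_omega_plus_one_def)
  then show ?thesis
    by (simp add: titer_succ titer_bar_GR_omega bar_GR_limit_stage)
qed

lemma titer_bar_LR_eq_bar_GR:
  fixes \<alpha> :: "'o::wellorder"
  shows "titer (bar LR) \<alpha> = titer (bar GR) \<alpha>"
    and "bar LR (titer (bar GR) \<alpha>) = bar GR (titer (bar GR) \<alpha>)"
proof -
  have "titer (bar LR) \<alpha> = titer (bar GR) \<alpha> \<and>
      upclosed (titer (bar GR) \<alpha> P1) \<and> upclosed (titer (bar GR) \<alpha> P2)"
    by (rule titer_eq_on_invariant)
      (auto simp: bar_LR_eq_bar_GR upclosed_bar_GR intro!: upclosed_Inter)
  then show "titer (bar LR) \<alpha> = titer (bar GR) \<alpha>"
    and "bar LR (titer (bar GR) \<alpha>) = bar GR (titer (bar GR) \<alpha>)"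
    by (simp_all add: bar_LR_eq_bar_GR)
qed

lemma is_closure_ordinal_bar_GR:
  fixes \<alpha> :: "'o::wellorder"
  assumes "is_omega_plus_one \<alpha>"
  shows "is_closure_ordinal (bar GR) \<alpha>"
proof -
  obtain \<beta> where "is_succ_of \<beta> \<alpha>" and "is_omega \<beta>"
    using assms by (auto simp: is_omega_plus_one_def)
  then show ?thesis
  proof (rule is_closure_ordinal_omega_plus_one)
    show "bar GR ((bar GR ^^ n) top) \<noteq> (bar GR ^^ n) top" for n
      using GR_stage_Suc_neq by (simp add: funpow_bar_GR bar_GR_GR_stage)
    show "bar GR (titer (bar GR) \<beta>) \<noteq> titer (bar GR) \<beta>"
      using \<open>is_omega \<beta>\<close> by (simp add: titer_bar_GR_omega bar_GR_limit_stage fun_eq_iff)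
    show "bar GR (titer (bar GR) \<alpha>) = titer (bar GR) \<alpha>"
      using assms by (simp add: titer_bar_GR_omega_plus_one bar_def fun_eq_iff)
  qed
qed

theorem mainTheorem15:
  shows "propertyB \<and>
    (\<forall>\<alpha>::'o::wellorder. is_omega \<alpha> \<longrightarrow>
        titer (bar GR) \<alpha> = (\<lambda>i. if i = P3 then UNIV else {})) \<and>
    (\<forall>\<alpha>::'o. is_omega_plus_one \<alpha> \<longrightarrow> titer (bar GR) \<alpha> = (\<lambda>i. {})) \<and>
    (\<forall>\<alpha>::'o. titer (bar LR) \<alpha> = titer (bar GR) \<alpha>) \<and>
    (\<forall>\<alpha>::'o. is_omega_plus_one \<alpha> \<longrightarrow>
        is_closure_ordinal (bar GR) \<alpha> \<and> is_closure_ordinal (bar LR) \<alpha>)"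
proof -
  have "is_closure_ordinal (bar LR) \<alpha> \<longleftrightarrow> is_closure_ordinal (bar GR) \<alpha>" for \<alpha> :: 'o
    by (simp add: is_closure_ordinal_def titer_bar_LR_eq_bar_GR)
  then show ?thesis
    by (simp add: propertyB_holds titer_bar_GR_omega titer_bar_GR_omega_plus_one
        titer_bar_LR_eq_bar_GR is_closure_ordinal_bar_GR)
qed

end
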